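(* Let $p$ be an odd prime, let $h_1,h_2$ be relatively prime positive integers, both different from $1$, and set $h=h_1+h_2$. Let $\mathcal{D}:\overline{\mathfrak m}^2\to\overline{\mathfrak m}^2$ be given by $\mathcal{D}(x_1,x_2)=(px_1+x_2^{p^{h_1}},\ px_2+x_1^{p^{h_2}})$. Let $n\ge1$ and let $(\xi,\eta)$ be a non-trivial $p^n$-torsion point of $\mathcal D$, i.e. $\mathcal{D}^{\circ n}(\xi,\eta)=(0,0)$ but $\mathcal{D}^{\circ(n-1)}(\xi,\eta)\ne(0,0)$. Then: if $n=2m$ is even, $v(\xi)=\dfrac{p^{h_2}+1}{p^{hm-h_1}(p^h-1)}$ and $v(\eta)=\dfrac{p^{h_1}+1}{p^{hm-h_2}(p^h-1)}$; if $n=2m+1$ is odd, $v(\xi)=\dfrac{p^{h_1}+1}{p^{hm}(p^h-1)}$ and $v(\eta)=\dfrac{p^{h_2}+1}{p^{hm}(p^h-1)}$.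
   Context: $v$ denotes the $p$-adic valuation on $\overline{\mathbb{Q}}_p$ normalized by $v(p)=1$, and $\overline{\mathfrak m}$ the maximal ideal of the ring of integers of $\overline{\mathbb{Q}}_p$; $\mathcal D^{\circ k}$ is the $k$-fold iterate ($\mathcal{D}^{\circ 0}=\mathrm{Id}$). The map $\mathcal D$ is a simple approximation of the multiplication-by-$p$ endomorphism of the 2-dimensional Lubin–Tate formal group associated with $(h_1,h_2)$. *)

theory Defs
  imports Complex_Main "HOL-Library.Extended_Real" "HOL-Computational_Algebra.Polynomial"
begin

definition is_valuation :: "('a::field \<Rightarrow> ereal) \<Rightarrow> bool" where
  "is_valuation v \<longleftrightarrow>
     (\<forall>x. v x = \<infinity> \<longleftrightarrow> x = 0) \<and> (\<forall>x. v x \<noteq> -\<infinity>) \<and>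
     (\<forall>x y. v (x * y) = v x + v y) \<and>
     (\<forall>x y. min (v x) (v y) \<le> v (x + y))"

definition alg_closed_field :: "'a::field itself \<Rightarrow> bool" where
  "alg_closed_field _ \<longleftrightarrow> (\<forall>q::'a poly. degree q > 0 \<longrightarrow> (\<exists>x. poly q x = 0))"

text \<open>The approximation D of multiplication by p on the 2-dim Lubin--Tate group.\<close>
definition LT_D :: "nat \<Rightarrow> nat \<Rightarrow> nat \<Rightarrow> 'a::field \<times> 'a \<Rightarrow> 'a \<times> 'a" where
  "LT_D p h1 h2 = (\<lambda>(x1, x2). (of_nat p * x1 + x2 ^ (p ^ h1), of_nat p * x2 + x1 ^ (p ^ h2)))"

end

theory Submission
  imports Defs
begin

(* If x and y have positive valuation and both coordinates of D(x, y) have valuation below 1,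
   then the power terms dominate: v(p y) > 1, so the second coordinate p y + x^(p^h2) has
   valuation p^h2 v x, and likewise the first has valuation p^h1 v y.  At the last nonzero point
   (a, b) of the orbit, p a = -b^(p^h1) and p b = -a^(p^h2) give a linear system for (v a, v b)
   with solution ((p^h1 + 1)/(p^h - 1), (p^h2 + 1)/(p^h - 1)).  Walking back along the orbit,
   two steps divide both valuations by p^h, and one extra step handles even n.  All valuations
   met on the way stay below 1 because p >= 3 (for p = 2, h1 = h2 = 1 the last nonzero point
   already has valuation 1). *)

lemma ereal_eq_times_imp_eq_divide:
  assumes "0 < c" and "ereal a = ereal c * e"
  shows "e = ereal (a / c)"
  using assms by (cases e) (auto simp: field_simps split: if_splits)

definition odd_torsion_valuation :: "nat \<Rightarrow> nat \<Rightarrow> nat \<Rightarrow> nat \<Rightarrow> real" where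
  "odd_torsion_valuation p h1 h2 m =
     (real p ^ h1 + 1) / (real p ^ ((h1 + h2) * m) * (real p ^ (h1 + h2) - 1))"

lemma odd_torsion_valuation_Suc:
  "odd_torsion_valuation p h1 h2 (Suc m) = odd_torsion_valuation p h1 h2 m / real p ^ (h1 + h2)"
  by (simp add: odd_torsion_valuation_def power_add mult_ac)

definition even_torsion_valuation :: "nat \<Rightarrow> nat \<Rightarrow> nat \<Rightarrow> nat \<Rightarrow> real" where
  "even_torsion_valuation p h1 h2 m =
     (real p ^ h2 + 1) / (real p ^ ((h1 + h2) * m - h1) * (real p ^ (h1 + h2) - 1))"

lemma even_torsion_valuation_Suc:
  "even_torsion_valuation p h1 h2 (Suc m) = odd_torsion_valuation p h2 h1 m / real p ^ h2"
proof -
  have "(h1 + h2) * Suc m - h1 = h2 + (h2 + h1) * m"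
    by simp
  then show ?thesis
    by (simp add: even_torsion_valuation_def odd_torsion_valuation_def power_add mult_ac add.commute)
qed

lemma odd_torsion_valuation_lt_one:
  assumes "3 \<le> p" and "0 < h1" and "0 < h2"
  shows "odd_torsion_valuation p h1 h2 m < 1"
proof -
  have power_ge_3: "3 \<le> real p ^ h" if "0 < h" for h
  proof -
    have "real p \<le> real p ^ h"
      using power_increasing[of 1 h "real p"] that assms(1) by simp
    moreover have "3 \<le> real p"
      using assms(1) by simp
    ultimately show ?thesis
      by linarith
  qed
  then have "3 \<le> real p ^ h1" and "3 * real p ^ h1 \<le> real p ^ h2 * real p ^ h1"
    using assms(2,3) by (auto intro: mult_right_mono)
  then have numerator_lt: "real p ^ h1 + 1 < real p ^ (h1 + h2) - 1"
    unfolding power_add by (simp add: mult.commute)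
  have "1 * (real p ^ (h1 + h2) - 1) \<le> real p ^ ((h1 + h2) * m) * (real p ^ (h1 + h2) - 1)"
    using assms(1) numerator_lt by (intro mult_right_mono) simp_all
  then have "real p ^ (h1 + h2) - 1 \<le> real p ^ ((h1 + h2) * m) * (real p ^ (h1 + h2) - 1)"
    by (simp only: mult_1)
  moreover have "0 \<le> real p ^ h1"
    by simp
  ultimately show ?thesis
    unfolding odd_torsion_valuation_def
    using numerator_lt by (subst divide_less_eq_1_pos) linarith+
qed

lemma LT_D_swap: "LT_D p h1 h2 (x, y) = prod.swap (LT_D p h2 h1 (y, x))"
  by (simp add: LT_D_def)

context
  fixes v :: "'a::field \<Rightarrow> ereal"
  assumes val: "is_valuation v"
begin

lemma valuation_eq_infinity_iff: "v x = \<infinity> \<longleftrightarrow> x = 0"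
  and valuation_neq_minf: "v x \<noteq> -\<infinity>"
  and valuation_mult: "v (x * y) = v x + v y"
  and valuation_add_ge_min: "min (v x) (v y) \<le> v (x + y)"
  using val unfolding is_valuation_def by auto

lemma valuation_one: "v 1 = 0"
proof -
  have "v 1 = v 1 + v 1"
    using valuation_mult[of 1 1] by simp
  then show ?thesis
    using valuation_eq_infinity_iff[of 1] valuation_neq_minf[of 1] by (cases "v 1") auto
qed

lemma valuation_minus: "v (- x) = v x"
proof -
  have "v (- 1) + v (- 1) = 0"
    using valuation_mult[of "-1" "-1"] valuation_one by simp
  then have "v (- 1) = 0"
    using valuation_eq_infinity_iff[of "-1"] valuation_neq_minf[of "-1"] by (cases "v (-1)") auto
  then show ?thesis
    using valuation_mult[of "-1" x] by simp
qed

lemma valuation_power: "v (x ^ k) = ereal (real k) * v x"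
proof (induction k)
  case 0
  show ?case using valuation_one by simp
next
  case (Suc k)
  then show ?case
    using valuation_mult[of x "x ^ k"] valuation_neq_minf[of x]
    by (cases "v x") (auto simp: algebra_simps)
qed

lemma valuation_power_pos: "0 < v x \<Longrightarrow> 0 < k \<Longrightarrow> 0 < v (x ^ k)"
  using valuation_power[of x k] by (cases "v x") auto

lemma valuation_add_eq_left:
  assumes "v x < v y"
  shows "v (x + y) = v x"
proof (rule antisym)
  have "min (v (x + y)) (v y) \<le> v x"
    using valuation_add_ge_min[of "x + y" "- y"] valuation_minus[of y] by simp
  with assms show "v (x + y) \<le> v x"
    by (auto simp: min_def split: if_splits)
  show "v x \<le> v (x + y)"
    using valuation_add_ge_min[of x y] assms by simp
qed

context
  fixes p :: nat
  assumes val_p: "v (of_nat p) = 1"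
begin

lemma p_pos: "0 < p"
  using val_p valuation_eq_infinity_iff[of 0] by (cases p) auto

lemma valuation_mult_p_gt_one: "0 < v x \<Longrightarrow> 1 < v (of_nat p * x)"
  using valuation_mult[of "of_nat p" x] val_p by (cases "v x") auto

lemma valuation_mult_p_pos: "0 < v x \<Longrightarrow> 0 < v (of_nat p * x)"
  using valuation_mult[of "of_nat p" x] val_p by (cases "v x") auto

lemma valuation_LT_D_pos:
  assumes "0 < v x" and "0 < v y"
  shows "0 < v (fst (LT_D p h1 h2 (x, y)))" and "0 < v (snd (LT_D p h1 h2 (x, y)))"
proof -
  have "0 < min (v (of_nat p * x)) (v (y ^ p ^ h1))"
    using assms valuation_mult_p_pos[of x] valuation_power_pos[of y "p ^ h1"] p_pos by simp
  then show "0 < v (fst (LT_D p h1 h2 (x, y)))"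
    unfolding LT_D_def by (auto intro: order_less_le_trans[OF _ valuation_add_ge_min])
  have "0 < min (v (of_nat p * y)) (v (x ^ p ^ h2))"
    using assms valuation_mult_p_pos[of y] valuation_power_pos[of x "p ^ h2"] p_pos by simp
  then show "0 < v (snd (LT_D p h1 h2 (x, y)))"
    unfolding LT_D_def by (auto intro: order_less_le_trans[OF _ valuation_add_ge_min])
qed

lemma valuation_snd_LT_D:
  assumes "0 < v y" and small: "v (snd (LT_D p h1 h2 (x, y))) < 1"
  shows "v (snd (LT_D p h1 h2 (x, y))) = ereal (real (p ^ h2)) * v x"
proof -
  have snd_eq: "snd (LT_D p h1 h2 (x, y)) = x ^ p ^ h2 + of_nat p * y"
    by (simp add: LT_D_def add.commute)
  have "v (x ^ p ^ h2) < v (of_nat p * y)"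
  proof (rule ccontr)
    assume "\<not> ?thesis"
    then have "v (of_nat p * y) \<le> v (snd (LT_D p h1 h2 (x, y)))"
      using valuation_add_ge_min[of "x ^ p ^ h2" "of_nat p * y"] snd_eq
      by (simp add: min_def split: if_splits)
    with small valuation_mult_p_gt_one[OF \<open>0 < v y\<close>] show False
      by simp
  qed
  then show ?thesis
    using valuation_add_eq_left snd_eq valuation_power by simp
qed

lemma valuation_fst_LT_D:
  assumes "0 < v x" and "v (fst (LT_D p h1 h2 (x, y))) < 1"
  shows "v (fst (LT_D p h1 h2 (x, y))) = ereal (real (p ^ h1)) * v y"
  using valuation_snd_LT_D[of x h2 h1 y] assms LT_D_swap[of p h1 h2 x y] by simp

lemma valuation_fst_LT_D_kernel:
  assumes kernel: "LT_D p h1 h2 (x, y) = (0, 0)" and nonzero: "(x, y) \<noteq> (0, 0)"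
  shows "v x = ereal ((real p ^ h1 + 1) / (real p ^ (h1 + h2) - 1))"
proof -
  have eq_x: "of_nat p * x = - (y ^ p ^ h1)" and eq_y: "of_nat p * y = - (x ^ p ^ h2)"
    using kernel by (auto simp: LT_D_def eq_neg_iff_add_eq_0)
  have "of_nat p \<noteq> (0 :: 'a)"
    using val_p valuation_eq_infinity_iff[of "of_nat p"] by auto
  then have "x \<noteq> 0" and "y \<noteq> 0"
    using eq_x eq_y nonzero by auto
  obtain a where a: "v x = ereal a"
    using \<open>x \<noteq> 0\<close> valuation_eq_infinity_iff[of x] valuation_neq_minf[of x] by (cases "v x") auto
  obtain b where b: "v y = ereal b"
    using \<open>y \<noteq> 0\<close> valuation_eq_infinity_iff[of y] valuation_neq_minf[of y] by (cases "v y") auto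
  have "v (of_nat p * x) = v (- (y ^ p ^ h1))" and "v (of_nat p * y) = v (- (x ^ p ^ h2))"
    using eq_x eq_y by simp_all
  then have ab_x: "1 + a = real p ^ h1 * b" and ab_y: "1 + b = real p ^ h2 * a"
    using a b val_p by (simp_all add: valuation_mult valuation_minus valuation_power)
  have "real p ^ h1 * (1 + b) = real p ^ h1 * real p ^ h2 * a"
    using ab_y by simp
  then have "a * (real p ^ h1 * real p ^ h2 - 1) = real p ^ h1 + 1"
    using ab_x by (simp add: algebra_simps)
  moreover have "0 < real p ^ h1 + 1"
    by (simp add: add_nonneg_pos)
  ultimately have "a = (real p ^ h1 + 1) / (real p ^ h1 * real p ^ h2 - 1)"
    by (auto simp: eq_divide_eq)
  then show ?thesis
    using a by (simp add: power_add)
qed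

lemma valuation_snd_LT_D_kernel:
  assumes "LT_D p h1 h2 (x, y) = (0, 0)" and "(x, y) \<noteq> (0, 0)"
  shows "v y = ereal ((real p ^ h2 + 1) / (real p ^ (h1 + h2) - 1))"
proof -
  have "LT_D p h2 h1 (y, x) = (0, 0)"
    using assms(1) by (simp add: LT_D_def)
  then show ?thesis
    using valuation_fst_LT_D_kernel[of h2 h1 y x] assms(2) by (auto simp: add.commute)
qed

lemma valuation_LT_D_funpow_pos:
  assumes "0 < v x" and "0 < v y"
  shows "0 < v (fst ((LT_D p h1 h2 ^^ k) (x, y))) \<and> 0 < v (snd ((LT_D p h1 h2 ^^ k) (x, y)))"
proof (induction k)
  case 0
  show ?case using assms by simp
next
  case (Suc k)
  then show ?case
    using valuation_LT_D_pos[of "fst ((LT_D p h1 h2 ^^ k) (x, y))" "snd ((LT_D p h1 h2 ^^ k) (x, y))"]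
    by simp
qed

lemma valuation_LT_D_twice:
  assumes "0 < v x" and "0 < v y"
    and small_fst: "v (fst ((LT_D p h1 h2 ^^ 2) (x, y))) < 1"
    and small_snd: "v (snd ((LT_D p h1 h2 ^^ 2) (x, y))) < 1"
  shows "v (fst ((LT_D p h1 h2 ^^ 2) (x, y))) = ereal (real p ^ (h1 + h2)) * v x"
    and "v (snd ((LT_D p h1 h2 ^^ 2) (x, y))) = ereal (real p ^ (h1 + h2)) * v y"
proof -
  obtain x' y' where step: "LT_D p h1 h2 (x, y) = (x', y')"
    by fastforce
  then have twice: "(LT_D p h1 h2 ^^ 2) (x, y) = LT_D p h1 h2 (x', y')"
    by (simp add: numeral_2_eq_2)
  have "0 < v x'" and "0 < v y'"
    using valuation_LT_D_pos[OF assms(1,2), of h1 h2] step by simp_all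
  have shrink: "e < 1" if "0 < e" and "ereal (real (p ^ h)) * e < 1" for e h
  proof -
    have "1 \<le> real (p ^ h)"
      using p_pos by simp
    then have "e \<le> ereal (real (p ^ h)) * e"
      using that(1) p_pos by (cases e) auto
    with that(2) show ?thesis
      by simp
  qed
  have fst_twice: "v (fst (LT_D p h1 h2 (x', y'))) = ereal (real (p ^ h1)) * v y'"
    using valuation_fst_LT_D[OF \<open>0 < v x'\<close>] small_fst twice by simp
  have snd_twice: "v (snd (LT_D p h1 h2 (x', y'))) = ereal (real (p ^ h2)) * v x'"
    using valuation_snd_LT_D[OF \<open>0 < v y'\<close>] small_snd twice by simp
  have "v y' < 1"
    using shrink[OF \<open>0 < v y'\<close>] fst_twice small_fst twice by simp
  then have y': "v y' = ereal (real (p ^ h2)) * v x"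
    using step valuation_snd_LT_D[OF \<open>0 < v y\<close>, of h1 h2 x] by simp
  have "v x' < 1"
    using shrink[OF \<open>0 < v x'\<close>] snd_twice small_snd twice by simp
  then have x': "v x' = ereal (real (p ^ h1)) * v y"
    using step valuation_fst_LT_D[OF \<open>0 < v x\<close>, of h1 h2 y] by simp
  have powers: "ereal (real (p ^ a)) * (ereal (real (p ^ b)) * e) = ereal (real p ^ (a + b)) * e"
    for a b e
    by (simp add: power_add mult.assoc[symmetric])
  show "v (fst ((LT_D p h1 h2 ^^ 2) (x, y))) = ereal (real p ^ (h1 + h2)) * v x"
    using twice fst_twice y' powers[of h1 h2] by simp
  show "v (snd ((LT_D p h1 h2 ^^ 2) (x, y))) = ereal (real p ^ (h1 + h2)) * v y"
    using twice snd_twice x' powers[of h2 h1] by (simp add: add.commute)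
qed

lemma valuation_odd_torsion:
  assumes "3 \<le> p" and "0 < h1" and "0 < h2"
    and "0 < v x" and "0 < v y"
    and "(LT_D p h1 h2 ^^ (2 * m + 1)) (x, y) = (0, 0)"
    and "(LT_D p h1 h2 ^^ (2 * m)) (x, y) \<noteq> (0, 0)"
  shows "v x = ereal (odd_torsion_valuation p h1 h2 m) \<and> v y = ereal (odd_torsion_valuation p h2 h1 m)"
  using assms(4-)
proof (induction m arbitrary: x y)
  case 0
  then show ?case
    using valuation_fst_LT_D_kernel valuation_snd_LT_D_kernel
    by (simp add: odd_torsion_valuation_def add.commute)
next
  case (Suc m)
  obtain x' y' where twice: "(LT_D p h1 h2 ^^ 2) (x, y) = (x', y')"
    by fastforce
  have shift: "(LT_D p h1 h2 ^^ k) (x', y') = (LT_D p h1 h2 ^^ (k + 2)) (x, y)" for k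
    using twice by (metis funpow_add comp_apply)
  have "(LT_D p h1 h2 ^^ (2 * m + 1)) (x', y') = (0, 0)"
    and "(LT_D p h1 h2 ^^ (2 * m)) (x', y') \<noteq> (0, 0)"
    using Suc.prems(3,4) shift[of "2 * m + 1"] shift[of "2 * m"] by (simp_all add: add_ac)
  moreover have "0 < v x'" and "0 < v y'"
    using twice valuation_LT_D_funpow_pos[OF Suc.prems(1,2), where k = 2 and ?h1.0 = h1 and ?h2.0 = h2]
    by simp_all
  ultimately have x': "v x' = ereal (odd_torsion_valuation p h1 h2 m)"
    and y': "v y' = ereal (odd_torsion_valuation p h2 h1 m)"
    using Suc.IH by blast+
  then have "v (fst ((LT_D p h1 h2 ^^ 2) (x, y))) < 1" and "v (snd ((LT_D p h1 h2 ^^ 2) (x, y))) < 1"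
    using twice odd_torsion_valuation_lt_one[OF assms(1-3)] odd_torsion_valuation_lt_one[OF assms(1,3,2)]
    by simp_all
  from valuation_LT_D_twice[OF Suc.prems(1,2) this]
  have "ereal (odd_torsion_valuation p h1 h2 m) = ereal (real p ^ (h1 + h2)) * v x"
    and "ereal (odd_torsion_valuation p h2 h1 m) = ereal (real p ^ (h1 + h2)) * v y"
    using twice x' y' by simp_all
  moreover have "0 < real p ^ (h1 + h2)"
    using p_pos by simp
  ultimately have "v x = ereal (odd_torsion_valuation p h1 h2 m / real p ^ (h1 + h2))"
    and "v y = ereal (odd_torsion_valuation p h2 h1 m / real p ^ (h1 + h2))"
    using ereal_eq_times_imp_eq_divide by blast+
  then show ?case
    by (simp add: odd_torsion_valuation_Suc add.commute)
qed

lemma valuation_even_torsion: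
  assumes "3 \<le> p" and "0 < h1" and "0 < h2"
    and "0 < v x" and "0 < v y" and "0 < m"
    and "(LT_D p h1 h2 ^^ (2 * m)) (x, y) = (0, 0)"
    and "(LT_D p h1 h2 ^^ (2 * m - 1)) (x, y) \<noteq> (0, 0)"
  shows "v x = ereal (even_torsion_valuation p h1 h2 m) \<and> v y = ereal (even_torsion_valuation p h2 h1 m)"
proof -
  obtain k where m: "m = Suc k"
    using \<open>0 < m\<close> by (cases m) auto
  obtain x' y' where step: "LT_D p h1 h2 (x, y) = (x', y')"
    by fastforce
  have shift: "(LT_D p h1 h2 ^^ j) (x', y') = (LT_D p h1 h2 ^^ Suc j) (x, y)" for j
    using step by (metis funpow_Suc_right comp_apply)
  have "(LT_D p h1 h2 ^^ (2 * k + 1)) (x', y') = (0, 0)"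
    and "(LT_D p h1 h2 ^^ (2 * k)) (x', y') \<noteq> (0, 0)"
    using assms(7,8) shift[of "2 * k + 1"] shift[of "2 * k"] m by simp_all
  moreover have "0 < v x'" and "0 < v y'"
    using step valuation_LT_D_pos[OF assms(4,5), of h1 h2] by simp_all
  ultimately have x': "v x' = ereal (odd_torsion_valuation p h1 h2 k)"
    and y': "v y' = ereal (odd_torsion_valuation p h2 h1 k)"
    using valuation_odd_torsion[OF assms(1-3)] by blast+
  then have "v (fst (LT_D p h1 h2 (x, y))) < 1" and "v (snd (LT_D p h1 h2 (x, y))) < 1"
    using step odd_torsion_valuation_lt_one[OF assms(1-3)] odd_torsion_valuation_lt_one[OF assms(1,3,2)]
    by simp_all
  from valuation_fst_LT_D[OF assms(4) this(1)] valuation_snd_LT_D[OF assms(5) this(2)]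
  have "ereal (odd_torsion_valuation p h1 h2 k) = ereal (real p ^ h1) * v y"
    and "ereal (odd_torsion_valuation p h2 h1 k) = ereal (real p ^ h2) * v x"
    using step x' y' by simp_all
  moreover have "0 < real p ^ h1" and "0 < real p ^ h2"
    using p_pos by simp_all
  ultimately have "v x = ereal (odd_torsion_valuation p h2 h1 k / real p ^ h2)"
    and "v y = ereal (odd_torsion_valuation p h1 h2 k / real p ^ h1)"
    using ereal_eq_times_imp_eq_divide by blast+
  then show ?thesis
    using m by (simp add: even_torsion_valuation_Suc)
qed

end

end

theorem theorem5p5:
  fixes v :: "'a::field_char_0 \<Rightarrow> ereal"
    and p h1 h2 n :: nat and \<xi> \<eta> :: 'a
  assumes "alg_closed_field TYPE('a)"
    and "is_valuation v" and "v (of_nat p) = 1"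
    and "prime p" and "odd p"
    and "h1 > 0" and "h2 > 0" and "h1 \<noteq> 1" and "h2 \<noteq> 1" and "coprime h1 h2"
    and "n \<ge> 1"
    and "v \<xi> > 0" and "v \<eta> > 0"
    and "(LT_D p h1 h2 ^^ n) (\<xi>, \<eta>) = (0, 0)"
    and "(LT_D p h1 h2 ^^ (n - 1)) (\<xi>, \<eta>) \<noteq> (0, 0)"
  shows "(\<forall>m. n = 2 * m \<longrightarrow>
            v \<xi> = ereal ((real p ^ h2 + 1) / (real p ^ ((h1 + h2) * m - h1) * (real p ^ (h1 + h2) - 1))) \<and>
            v \<eta> = ereal ((real p ^ h1 + 1) / (real p ^ ((h1 + h2) * m - h2) * (real p ^ (h1 + h2) - 1))))
       \<and> (\<forall>m. n = 2 * m + 1 \<longrightarrow>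
            v \<xi> = ereal ((real p ^ h1 + 1) / (real p ^ ((h1 + h2) * m) * (real p ^ (h1 + h2) - 1))) \<and>
            v \<eta> = ereal ((real p ^ h2 + 1) / (real p ^ ((h1 + h2) * m) * (real p ^ (h1 + h2) - 1))))"
proof -
  have "3 \<le> p"
    using \<open>prime p\<close> \<open>odd p\<close> prime_ge_2_nat[of p] by (cases "p = 2") auto
  note torsion = assms(2,3) \<open>3 \<le> p\<close> assms(6,7,12,13)
  show ?thesis
  proof (intro conjI allI impI)
    fix m
    assume "n = 2 * m"
    with assms(11,14,15) valuation_even_torsion[OF torsion, of m]
    show "v \<xi> = ereal ((real p ^ h2 + 1) / (real p ^ ((h1 + h2) * m - h1) * (real p ^ (h1 + h2) - 1)))"
      and "v \<eta> = ereal ((real p ^ h1 + 1) / (real p ^ ((h1 + h2) * m - h2) * (real p ^ (h1 + h2) - 1)))"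
      by (auto simp: even_torsion_valuation_def add.commute)
  next
    fix m
    assume "n = 2 * m + 1"
    with assms(14,15) valuation_odd_torsion[OF torsion, of m]
    show "v \<xi> = ereal ((real p ^ h1 + 1) / (real p ^ ((h1 + h2) * m) * (real p ^ (h1 + h2) - 1)))"
      and "v \<eta> = ereal ((real p ^ h2 + 1) / (real p ^ ((h1 + h2) * m) * (real p ^ (h1 + h2) - 1)))"
      by (auto simp: odd_torsion_valuation_def add.commute)
  qed
qed

end
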